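(* Fix single-party measurements on $\mathbb C^2$ given by orthonormal bases $\{|a_i\rangle\}$, $\{|a'_i\rangle\}$, $\{|b_j\rangle\}$, $\{|b'_j\rangle\}$, and let $e_{AB},e_{AB'},e_{A'B},e_{A'B'}$ be four measurements on $\mathbb C^2\otimes\mathbb C^2$ (each given by an orthonormal basis $\{|p_{X_iY_j}\rangle\}_{i,j=1,2}$ of $\mathbb C^4$ with outcomes $\lambda_{X_iY_j}$), performed on a state given by a unit vector $|p\rangle$ (probabilities $p(\lambda_{X_iY_j})=|\langle p_{X_iY_j}|p\rangle|^2$). Call $e_{XY}$ product if $|p_{X_iY_j}\rangle=|x_i\rangle\otimes|y_j\rangle$ for all $i,j$, where $\{|x_i\rangle\}$, $\{|y_j\rangle\}$ are the fixed bases corresponding to $X$ and $Y$. If the marginal distribution law fails for each of the four pairs $(e_{AB},e_{AB'})$, $(e_{A'B},e_{A'B'})$, $(e_{AB},e_{A'B})$, $(e_{AB'},e_{A'B'})$, then at least two of the four measurements are not product (i.e. are entangled).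
   Context: Marginal distribution law: for coincidence measurements $e_{XY}$ ($X\in\{A,A'\}$, $Y\in\{B,B'\}$) with outcomes $\lambda_{X_iY_j}$, $i,j=1,2$, and probabilities $p(\lambda_{X_iY_j})$, the law holds for a pair $e_{XY},e_{XY'}$ sharing the first letter if $\sum_j p(\lambda_{X_iY_j})=\sum_j p(\lambda_{X_iY'_j})$ for $i=1,2$, and for a pair $e_{XY},e_{X'Y}$ sharing the second letter if $\sum_j p(\lambda_{X_jY_i})=\sum_j p(\lambda_{X'_jY_i})$ for $i=1,2$. *)

theory Defs
  imports Complex_Main "HOL-Library.Numeral_Type"
begin

text \<open>Vectors of C^n are functions from a finite index type to complex.
  C^2 is indexed by the two-element type 2 (elements 0,1 standing for outcomes 1,2);
  C^2 (x) C^2 = C^4 is indexed by 2 \<times> 2.\<close>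

definition cinner :: "('i::finite \<Rightarrow> complex) \<Rightarrow> ('i \<Rightarrow> complex) \<Rightarrow> complex" where
  "cinner u v = (\<Sum>i\<in>UNIV. cnj (u i) * v i)"

definition unit_vec :: "('i::finite \<Rightarrow> complex) \<Rightarrow> bool" where
  "unit_vec v \<longleftrightarrow> cinner v v = 1"

definition is_onb :: "('k::finite \<Rightarrow> 'i::finite \<Rightarrow> complex) \<Rightarrow> bool" where
  "is_onb b \<longleftrightarrow> CARD('k) = CARD('i) \<and>
     (\<forall>k l. cinner (b k) (b l) = (if k = l then 1 else 0))"

definition tensor :: "(2 \<Rightarrow> complex) \<Rightarrow> (2 \<Rightarrow> complex) \<Rightarrow> (2 \<times> 2 \<Rightarrow> complex)" where
  "tensor x y = (\<lambda>(i, j). x i * y j)"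

text \<open>A coincidence measurement e_XY: orthonormal basis |p_{X_i Y_j}> of C^4.\<close>
type_synonym meas = "2 \<Rightarrow> 2 \<Rightarrow> (2 \<times> 2 \<Rightarrow> complex)"

definition is_meas :: "meas \<Rightarrow> bool" where
  "is_meas e \<longleftrightarrow> is_onb (\<lambda>(i, j). e i j)"

definition prob :: "meas \<Rightarrow> (2 \<times> 2 \<Rightarrow> complex) \<Rightarrow> 2 \<Rightarrow> 2 \<Rightarrow> real" where
  "prob e p i j = (cmod (cinner (e i j) p))\<^sup>2"

definition marginal_first :: "meas \<Rightarrow> meas \<Rightarrow> (2 \<times> 2 \<Rightarrow> complex) \<Rightarrow> bool" where
  "marginal_first e f p \<longleftrightarrow> (\<forall>i. (\<Sum>j\<in>UNIV. prob e p i j) = (\<Sum>j\<in>UNIV. prob f p i j))"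

definition marginal_second :: "meas \<Rightarrow> meas \<Rightarrow> (2 \<times> 2 \<Rightarrow> complex) \<Rightarrow> bool" where
  "marginal_second e f p \<longleftrightarrow> (\<forall>i. (\<Sum>j\<in>UNIV. prob e p j i) = (\<Sum>j\<in>UNIV. prob f p j i))"

definition is_product :: "meas \<Rightarrow> (2 \<Rightarrow> 2 \<Rightarrow> complex) \<Rightarrow> (2 \<Rightarrow> 2 \<Rightarrow> complex) \<Rightarrow> bool" where
  "is_product e x y \<longleftrightarrow> (\<forall>i j. e i j = tensor (x i) (y j))"

end

theory Submission
  imports Defs
begin

text \<open>If both measurements of a pair sharing the letter X are product, the X-marginal of each is
  the squared norm of the partial inner product of the state with the X-basis vector, summed over
  an orthonormal basis of the Y-factor; by Parseval in \<open>\<complex>\<^sup>2\<close> this sum does not depend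
  on the Y-basis. Hence each violated marginal law rules out one pair of product measurements, and
  the four pairs form a 4-cycle, which has no vertex cover of size one.\<close>

lemma UNIV_2_eq: "(UNIV :: 2 set) = {0, 1}"
proof -
  have "{0, 1} \<subseteq> (UNIV :: 2 set)" and "card {0, 1::2} = card (UNIV :: 2 set)"
    by simp_all
  then show ?thesis
    by (metis card_subset_eq finite)
qed

lemma sum_UNIV_2: "(\<Sum>i\<in>(UNIV::2 set). f i) = f 0 + f 1"
  by (simp add: UNIV_2_eq)

lemma sum_UNIV_2_times_2:
  "(\<Sum>i\<in>(UNIV::(2\<times>2) set). f i) = f (0,0) + f (0,1) + f (1,0) + f (1,1)"
proof -
  have "(\<Sum>i\<in>(UNIV::(2\<times>2) set). f i) = (\<Sum>i\<in>(UNIV::2 set). \<Sum>j\<in>(UNIV::2 set). f (i,j))"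
    by (simp add: sum.cartesian_product flip: UNIV_Times_UNIV)
  then show ?thesis
    by (simp add: sum_UNIV_2 add.assoc)
qed

text \<open>In \<open>\<complex>\<^sup>2\<close> the orthogonal complement of a unit vector \<open>u\<close> is spanned by
  \<open>(-cnj u\<^sub>1, cnj u\<^sub>0)\<close>; the coefficient is the determinant of \<open>u, v\<close>.\<close>
lemma orthogonal_to_unit_vector_C2:
  fixes u0 u1 v0 v1 :: complex
  defines "d \<equiv> u0 * v1 - u1 * v0"
  assumes unit: "cnj u0 * u0 + cnj u1 * u1 = 1" and orth: "cnj u0 * v0 + cnj u1 * v1 = 0"
  shows "v0 = - (d * cnj u1)" and "v1 = d * cnj u0"
proof -
  have "d * cnj u1 = u0 * (cnj u1 * v1) - u1 * v0 * cnj u1"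
    by (simp add: d_def algebra_simps)
  also have "cnj u1 * v1 = - (cnj u0 * v0)"
    using orth by (simp add: eq_neg_iff_add_eq_0 add.commute)
  also have "u0 * - (cnj u0 * v0) - u1 * v0 * cnj u1 = - v0 * (cnj u0 * u0 + cnj u1 * u1)"
    by (simp add: algebra_simps)
  finally show "v0 = - (d * cnj u1)"
    using unit by simp
  have "d * cnj u0 = u0 * v1 * cnj u0 - u1 * (cnj u0 * v0)"
    by (simp add: d_def algebra_simps)
  also have "\<dots> = v1 * (cnj u0 * u0 + cnj u1 * u1)"
    using orth by (simp add: eq_neg_iff_add_eq_0[symmetric] algebra_simps)
  finally show "v1 = d * cnj u0"
    using unit by simp
qed

lemma lagrange_identity_C2:
  fixes u0 u1 q0 q1 :: complex
  shows "(cmod (cnj u0 * q0 + cnj u1 * q1))\<^sup>2 + (cmod (u0 * q1 - u1 * q0))\<^sup>2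
         = ((cmod u0)\<^sup>2 + (cmod u1)\<^sup>2) * ((cmod q0)\<^sup>2 + (cmod q1)\<^sup>2)"
proof -
  have "complex_of_real ((cmod (cnj u0 * q0 + cnj u1 * q1))\<^sup>2 + (cmod (u0 * q1 - u1 * q0))\<^sup>2)
      = complex_of_real (((cmod u0)\<^sup>2 + (cmod u1)\<^sup>2) * ((cmod q0)\<^sup>2 + (cmod q1)\<^sup>2))"
    unfolding of_real_add of_real_mult complex_norm_square
    by (simp add: algebra_simps)
  then show ?thesis
    using of_real_eq_iff by blast
qed

text \<open>By the previous lemma the second basis vector is a unimodular multiple of
  \<open>(-cnj u\<^sub>1, cnj u\<^sub>0)\<close>, so \<open>|\<langle>y 1, q\<rangle>| = |u\<^sub>0 q\<^sub>1 - u\<^sub>1 q\<^sub>0|\<close>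
  and Lagrange's identity applies.\<close>
lemma parseval_onb_C2:
  fixes y :: "2 \<Rightarrow> 2 \<Rightarrow> complex" and q :: "2 \<Rightarrow> complex"
  assumes "is_onb y"
  shows "(\<Sum>j\<in>UNIV. (cmod (cinner (y j) q))\<^sup>2) = (\<Sum>k\<in>UNIV. (cmod (q k))\<^sup>2)"
proof -
  define u0 u1 v0 v1 where "u0 = y 0 0" and "u1 = y 0 1" and "v0 = y 1 0" and "v1 = y 1 1"
  define d where "d = u0 * v1 - u1 * v0"
  have onb: "\<And>k l. cinner (y k) (y l) = (if k = l then 1 else 0)"
    using assms by (simp add: is_onb_def)
  have unit_u: "cnj u0 * u0 + cnj u1 * u1 = 1" and unit_v: "cnj v0 * v0 + cnj v1 * v1 = 1"
    and orth: "cnj u0 * v0 + cnj u1 * v1 = 0"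
    using onb[of 0 0] onb[of 1 1] onb[of 0 1]
    by (simp_all add: cinner_def sum_UNIV_2 u0_def u1_def v0_def v1_def)
  note v = orthogonal_to_unit_vector_C2[OF unit_u orth, folded d_def]
  have "complex_of_real ((cmod u0)\<^sup>2 + (cmod u1)\<^sup>2) = 1"
    unfolding of_real_add complex_norm_square using unit_u by (simp add: mult.commute)
  then have norm_u: "(cmod u0)\<^sup>2 + (cmod u1)\<^sup>2 = 1"
    using of_real_eq_1_iff by blast
  have "complex_of_real ((cmod d)\<^sup>2 * ((cmod u1)\<^sup>2 + (cmod u0)\<^sup>2)) = 1"
    unfolding of_real_add of_real_mult complex_norm_square using unit_v by (simp add: v algebra_simps)
  then have "(cmod d)\<^sup>2 * ((cmod u1)\<^sup>2 + (cmod u0)\<^sup>2) = 1"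
    using of_real_eq_1_iff by blast
  then have norm_d: "cmod d = 1"
    using norm_u norm_ge_zero[of d] by (auto simp: add.commute power2_eq_1_iff)
  have "cinner (y 1) q = cnj d * (u0 * q 1 - u1 * q 0)"
    by (simp add: cinner_def sum_UNIV_2 flip: v0_def v1_def) (simp add: v algebra_simps)
  then have "(\<Sum>j\<in>UNIV. (cmod (cinner (y j) q))\<^sup>2)
      = (cmod (cnj u0 * q 0 + cnj u1 * q 1))\<^sup>2 + (cmod (u0 * q 1 - u1 * q 0))\<^sup>2"
    by (simp add: sum_UNIV_2 cinner_def norm_mult norm_d u0_def u1_def)
  also have "\<dots> = (\<Sum>k\<in>UNIV. (cmod (q k))\<^sup>2)"
    by (simp add: lagrange_identity_C2 norm_u sum_UNIV_2)
  finally show ?thesis .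
qed

lemma cinner_tensor_left:
  "cinner (tensor x y) p = cinner y (\<lambda>l. \<Sum>k\<in>UNIV. cnj (x k) * p (k, l))"
  by (simp add: cinner_def tensor_def sum_UNIV_2_times_2 sum_UNIV_2 algebra_simps)

lemma cinner_tensor_right:
  "cinner (tensor x y) p = cinner x (\<lambda>k. \<Sum>l\<in>UNIV. cnj (y l) * p (k, l))"
  by (simp add: cinner_def tensor_def sum_UNIV_2_times_2 sum_UNIV_2 algebra_simps)

lemma marginal_first_if_products:
  assumes "is_onb b" "is_onb b'" "is_product e a b" "is_product f a b'"
  shows "marginal_first e f p"
  using assms
  by (simp add: marginal_first_def prob_def is_product_def cinner_tensor_left parseval_onb_C2)

lemma marginal_second_if_products:
  assumes "is_onb a" "is_onb a'" "is_product e a b" "is_product f a' b"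
  shows "marginal_second e f p"
  using assms
  by (simp add: marginal_second_def prob_def is_product_def cinner_tensor_right parseval_onb_C2)

theorem theorem4:
  fixes a a' b b' :: "2 \<Rightarrow> 2 \<Rightarrow> complex"
    and eAB eAB' eA'B eA'B' :: meas
    and p :: "2 \<times> 2 \<Rightarrow> complex"
  assumes "is_onb a" and "is_onb a'" and "is_onb b" and "is_onb b'"
    and "is_meas eAB" and "is_meas eAB'" and "is_meas eA'B" and "is_meas eA'B'"
    and "unit_vec p"
    and "\<not> marginal_first eAB eAB' p"
    and "\<not> marginal_first eA'B eA'B' p"
    and "\<not> marginal_second eAB eA'B p"
    and "\<not> marginal_second eAB' eA'B' p"
  shows "2 \<le> length (filter (\<lambda>P. \<not> P)
           [is_product eAB a b, is_product eAB' a b', is_product eA'B a' b, is_product eA'B' a' b'])"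
proof -
  have "\<not> (is_product eAB a b \<and> is_product eAB' a b')"
    and "\<not> (is_product eA'B a' b \<and> is_product eA'B' a' b')"
    using assms marginal_first_if_products by blast+
  moreover have "\<not> (is_product eAB a b \<and> is_product eA'B a' b)"
    and "\<not> (is_product eAB' a b' \<and> is_product eA'B' a' b')"
    using assms marginal_second_if_products by blast+
  ultimately show ?thesis
    by auto
qed

end
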